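(* Let $(\mathcal C,S,T)$ be a finite basic association schemoid whose underlying category is a connected groupoid with $T(f)=f^{-1}$, let $H:\mathcal C\to\mathbb K\text{-Mod}$ be a functor such that $D=\pi^*p^*H$ has all $D_g$ finite abelian groups, let $D_+\to\mathcal E\xrightarrow{q}\mathcal C$ be a linear extension and $(\mathcal E,\widetilde S)$ with $\widetilde S=\{q^{-1}(\sigma)\}_{\sigma\in S}$ the associated schemoid extension, and let $\mathbb K$ be a field. Then the algebra map $\mathbb K(q):\mathbb K(\mathcal E,\widetilde S)\to\mathbb K(\mathcal C,S)$, $s_{\tilde\pi}\mapsto n^q_{\tilde\pi}s_{q(\tilde\pi)}=\#D_g\, s_{q(\tilde\pi)}$, is an isomorphism if and only if the characteristic of $\mathbb K$ does not divide $\#D_g$ for any morphism $g$ of $\mathcal C$; if the characteristic divides $\#D_g$ for some $g$, then $\mathbb K(q)$ is the zero map.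
   Context: Write $s(f),t(f)$ for source and target. A quasi-schemoid is a pair $(\mathcal C,S)$ with $\mathcal C$ a small category and $S$ a partition of $mor(\mathcal C)$ into nonempty blocks such that for all $\sigma,\tau,\mu\in S$ and $f,g\in\mu$ the sets $\{(a,b)\in\sigma\times\tau: s(a)=t(b), a\circ b=f\}$ and the analogous set for $g$ have equal cardinality. An association schemoid is a triple $(\mathcal C,S,T)$ with $(\mathcal C,S)$ a quasi-schemoid, every block containing an endomorphism consisting only of endomorphisms, and $T$ a contravariant endofunctor with $T^2=\mathrm{id}$ and $\{T(f):f\in\sigma\}\in S$. It is finite if $mor(\mathcal C)$ is finite, unital if every block meeting $\{1_x\}$ lies in $\{1_x\}$, basic if unital with $\mathcal C$ a groupoid. The category $F(\mathcal C)$ has objects the morphisms of $\mathcal C$ and morphisms $f\to g$ the pairs $(\alpha,\beta)$ with $g=\alpha f\beta$; a natural system is a functor $D:F(\mathcal C)\to\mathbb K\text{-Mod}$, $f_*=D(f,1)$, $g^*=D(1,g)$; $D=\pi^*p^*H$ means $D_f=H(t(f))$, $D(\alpha,\beta)=H(\alpha)$. A linear extension $D_+\to\mathcal E\xrightarrow{q}\mathcal C$ consists of a category $\mathcal E$ with the same objects and a full functor $q$ that is the identity on objects, such that each $D_f$ acts transitively and freely on $q^{-1}(f)$ and $(f_0+\alpha)(g_0+\beta)=f_0g_0+f_*\beta+g^*\alpha$. The category algebra $\mathbb K\mathcal C$ is the free $\mathbb K$-module on $mor(\mathcal C)$ with product $a\cdot b=a\circ b$ if composable and $0$ otherwise; $s_\sigma=\sum_{f\in\sigma}f$;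 the schemoid algebra $\mathbb K(\mathcal C,S)$ is the span of the $s_\sigma$. $q(\tilde\pi)$ denotes the block of $S$ containing $q(\tilde\pi)$, and $n^q_{\tilde\pi}$ is the number of $f\in\tilde\pi$ with $t(f)=x$ and $q(f)=g$ (for any $x$ and $g\in q(\tilde\pi)$ with $t(g)=x$), which equals $\#D_g$ (constant since $\mathcal C$ is connected). *)

theory Defs
  imports Main "HOL.Modules"
begin

record ('o, 'm) cat =
  Obj  :: "'o set"
  Mor  :: "'m set"
  Dom  :: "'m \<Rightarrow> 'o"
  Cod  :: "'m \<Rightarrow> 'o"
  Comp :: "'m \<Rightarrow> 'm \<Rightarrow> 'm"      (* Comp a b = a \<circ> b, defined when Dom a = Cod b *)
  Ide  :: "'o \<Rightarrow> 'm"

definition is_category :: "('o, 'm) cat \<Rightarrow> bool" where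
  "is_category C \<longleftrightarrow>
     (\<forall>f\<in>Mor C. Dom C f \<in> Obj C \<and> Cod C f \<in> Obj C) \<and>
     (\<forall>x\<in>Obj C. Ide C x \<in> Mor C \<and> Dom C (Ide C x) = x \<and> Cod C (Ide C x) = x) \<and>
     (\<forall>f\<in>Mor C. \<forall>g\<in>Mor C. Dom C f = Cod C g \<longrightarrow>
         Comp C f g \<in> Mor C \<and> Dom C (Comp C f g) = Dom C g \<and> Cod C (Comp C f g) = Cod C f) \<and>
     (\<forall>f\<in>Mor C. \<forall>g\<in>Mor C. \<forall>h\<in>Mor C. Dom C f = Cod C g \<longrightarrow> Dom C g = Cod C h \<longrightarrow>
         Comp C (Comp C f g) h = Comp C f (Comp C g h)) \<and>
     (\<forall>f\<in>Mor C. Comp C (Ide C (Cod C f)) f = f \<and> Comp C f (Ide C (Dom C f)) = f)"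

definition is_groupoid :: "('o, 'm) cat \<Rightarrow> bool" where
  "is_groupoid C \<longleftrightarrow> is_category C \<and>
     (\<forall>f\<in>Mor C. \<exists>g\<in>Mor C. Dom C g = Cod C f \<and> Cod C g = Dom C f \<and>
         Comp C g f = Ide C (Dom C f) \<and> Comp C f g = Ide C (Cod C f))"

definition connected_cat :: "('o, 'm) cat \<Rightarrow> bool" where
  "connected_cat C \<longleftrightarrow> Obj C \<noteq> {} \<and>
     (\<forall>x\<in>Obj C. \<forall>y\<in>Obj C.
        (x, y) \<in> ({(Dom C f, Cod C f) | f. f \<in> Mor C} \<union> {(Cod C f, Dom C f) | f. f \<in> Mor C})\<^sup>*)"

definition is_partition :: "'m set \<Rightarrow> 'm set set \<Rightarrow> bool" where
  "is_partition M S \<longleftrightarrow> (\<forall>\<sigma>\<in>S. \<sigma> \<noteq> {}) \<and> \<Union>S = M \<and>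
     (\<forall>\<sigma>\<in>S. \<forall>\<tau>\<in>S. \<sigma> \<noteq> \<tau> \<longrightarrow> \<sigma> \<inter> \<tau> = {})"

definition structure_pairs :: "('o, 'm) cat \<Rightarrow> 'm set \<Rightarrow> 'm set \<Rightarrow> 'm \<Rightarrow> ('m \<times> 'm) set" where
  "structure_pairs C \<sigma> \<tau> f = {(a, b) \<in> \<sigma> \<times> \<tau>. Dom C a = Cod C b \<and> Comp C a b = f}"

definition quasi_schemoid :: "('o, 'm) cat \<Rightarrow> 'm set set \<Rightarrow> bool" where
  "quasi_schemoid C S \<longleftrightarrow> is_category C \<and> is_partition (Mor C) S \<and>
     (\<forall>\<sigma>\<in>S. \<forall>\<tau>\<in>S. \<forall>\<mu>\<in>S. \<forall>f\<in>\<mu>. \<forall>g\<in>\<mu>.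
        card (structure_pairs C \<sigma> \<tau> f) = card (structure_pairs C \<sigma> \<tau> g))"

definition contravariant_involution ::
  "('o, 'm) cat \<Rightarrow> ('o \<Rightarrow> 'o) \<Rightarrow> ('m \<Rightarrow> 'm) \<Rightarrow> bool" where
  "contravariant_involution C To T \<longleftrightarrow>
     (\<forall>x\<in>Obj C. To x \<in> Obj C \<and> To (To x) = x \<and> T (Ide C x) = Ide C (To x)) \<and>
     (\<forall>f\<in>Mor C. T f \<in> Mor C \<and> Dom C (T f) = To (Cod C f) \<and> Cod C (T f) = To (Dom C f)
                 \<and> T (T f) = f) \<and>
     (\<forall>f\<in>Mor C. \<forall>g\<in>Mor C. Dom C f = Cod C g \<longrightarrow> T (Comp C f g) = Comp C (T g) (T f))"

definition association_schemoid ::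
  "('o, 'm) cat \<Rightarrow> 'm set set \<Rightarrow> ('o \<Rightarrow> 'o) \<Rightarrow> ('m \<Rightarrow> 'm) \<Rightarrow> bool" where
  "association_schemoid C S To T \<longleftrightarrow> quasi_schemoid C S \<and>
     (\<forall>\<sigma>\<in>S. (\<exists>f\<in>\<sigma>. Dom C f = Cod C f) \<longrightarrow> (\<forall>f\<in>\<sigma>. Dom C f = Cod C f)) \<and>
     contravariant_involution C To T \<and>
     (\<forall>\<sigma>\<in>S. T ` \<sigma> \<in> S)"

definition unital_schemoid :: "('o, 'm) cat \<Rightarrow> 'm set set \<Rightarrow> bool" where
  "unital_schemoid C S \<longleftrightarrow>
     (\<forall>x\<in>Obj C. \<forall>\<sigma>\<in>S. \<sigma> \<inter> {Ide C x} \<noteq> {} \<longrightarrow> \<sigma> \<subseteq> {Ide C x})"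

definition finite_basic_association_schemoid ::
  "('o, 'm) cat \<Rightarrow> 'm set set \<Rightarrow> ('o \<Rightarrow> 'o) \<Rightarrow> ('m \<Rightarrow> 'm) \<Rightarrow> bool" where
  "finite_basic_association_schemoid C S To T \<longleftrightarrow>
     association_schemoid C S To T \<and> finite (Mor C) \<and> unital_schemoid C S \<and> is_groupoid C"

text \<open>A functor \<open>H : C \<rightarrow> K-Mod\<close>: each object \<open>x\<close> goes to a K-submodule \<open>Hob x\<close> of an
  ambient K-module (with scalar multiplication \<open>scale\<close>), each morphism to a K-linear map.\<close>
definition module_functor ::
  "('k::field \<Rightarrow> 'v::ab_group_add \<Rightarrow> 'v) \<Rightarrow> ('o, 'm) cat \<Rightarrow> ('o \<Rightarrow> 'v set) \<Rightarrow> ('m \<Rightarrow> 'v \<Rightarrow> 'v) \<Rightarrow> bool" where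
  "module_functor scale C Hob Hm \<longleftrightarrow> module scale \<and>
     (\<forall>x\<in>Obj C. 0 \<in> Hob x \<and> (\<forall>a\<in>Hob x. \<forall>b\<in>Hob x. a + b \<in> Hob x) \<and> (\<forall>c. \<forall>a\<in>Hob x. scale c a \<in> Hob x)) \<and>
     (\<forall>f\<in>Mor C. \<forall>a\<in>Hob (Dom C f). Hm f a \<in> Hob (Cod C f)) \<and>
     (\<forall>f\<in>Mor C. \<forall>a\<in>Hob (Dom C f). \<forall>b\<in>Hob (Dom C f). Hm f (a + b) = Hm f a + Hm f b) \<and>
     (\<forall>f\<in>Mor C. \<forall>c. \<forall>a\<in>Hob (Dom C f). Hm f (scale c a) = scale c (Hm f a)) \<and>
     (\<forall>x\<in>Obj C. \<forall>a\<in>Hob x. Hm (Ide C x) a = a) \<and>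
     (\<forall>f\<in>Mor C. \<forall>g\<in>Mor C. Dom C f = Cod C g \<longrightarrow>
        (\<forall>a\<in>Hob (Dom C g). Hm (Comp C f g) a = Hm f (Hm g a)))"

text \<open>The natural system \<open>D = \<pi>\<^sup>*p\<^sup>*H\<close>: \<open>D\<^sub>f = H(t(f))\<close>, \<open>D(\<alpha>,\<beta>) = H(\<alpha>)\<close>.\<close>
definition pbH_obj :: "('o, 'm) cat \<Rightarrow> ('o \<Rightarrow> 'v set) \<Rightarrow> 'm \<Rightarrow> 'v set" where
  "pbH_obj C Hob f = Hob (Cod C f)"

definition pbH_map :: "('m \<Rightarrow> 'v \<Rightarrow> 'v) \<Rightarrow> 'm \<times> 'm \<Rightarrow> 'v \<Rightarrow> 'v" where
  "pbH_map Hm \<alpha>\<beta> = Hm (fst \<alpha>\<beta>)"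

text \<open>\<open>f\<^sub>* = D(f,1) : D\<^sub>g \<rightarrow> D\<^sub>f\<^sub>g\<close> and \<open>g\<^sup>* = D(1,g) : D\<^sub>f \<rightarrow> D\<^sub>f\<^sub>g\<close>.\<close>
definition lower_star :: "('o, 'm) cat \<Rightarrow> ('m \<Rightarrow> 'v \<Rightarrow> 'v) \<Rightarrow> 'm \<Rightarrow> 'm \<Rightarrow> 'v \<Rightarrow> 'v" where
  "lower_star C Hm f g = pbH_map Hm (f, Ide C (Dom C g))"

definition upper_star :: "('o, 'm) cat \<Rightarrow> ('m \<Rightarrow> 'v \<Rightarrow> 'v) \<Rightarrow> 'm \<Rightarrow> 'm \<Rightarrow> 'v \<Rightarrow> 'v" where
  "upper_star C Hm f g = pbH_map Hm (Ide C (Cod C f), g)"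

text \<open>\<open>D\<^sub>+ \<rightarrow> E \<rightarrow>q C\<close> with \<open>D = \<pi>\<^sup>*p\<^sup>*H\<close>; \<open>act e \<alpha>\<close> is \<open>e + \<alpha>\<close>.\<close>
definition linear_extension ::
  "('o, 'm) cat \<Rightarrow> ('o \<Rightarrow> 'v::ab_group_add set) \<Rightarrow> ('m \<Rightarrow> 'v \<Rightarrow> 'v) \<Rightarrow>
   ('o, 'e) cat \<Rightarrow> ('e \<Rightarrow> 'm) \<Rightarrow> ('e \<Rightarrow> 'v \<Rightarrow> 'e) \<Rightarrow> bool" where
  "linear_extension C Hob Hm E q act \<longleftrightarrow>
     is_category E \<and> Obj E = Obj C \<and>
     \<comment> \<open>q is a functor that is the identity on objects\<close>
     (\<forall>e\<in>Mor E. q e \<in> Mor C \<and> Dom C (q e) = Dom E e \<and> Cod C (q e) = Cod E e) \<and>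
     (\<forall>x\<in>Obj E. q (Ide E x) = Ide C x) \<and>
     (\<forall>a\<in>Mor E. \<forall>b\<in>Mor E. Dom E a = Cod E b \<longrightarrow> q (Comp E a b) = Comp C (q a) (q b)) \<and>
     \<comment> \<open>q is full\<close>
     (\<forall>f\<in>Mor C. \<exists>e\<in>Mor E. Dom E e = Dom C f \<and> Cod E e = Cod C f \<and> q e = f) \<and>
     \<comment> \<open>\<open>D\<^sub>f\<close> acts on \<open>q\<^sup>-\<^sup>1(f)\<close>\<close>
     (\<forall>e\<in>Mor E. \<forall>\<alpha>\<in>pbH_obj C Hob (q e). act e \<alpha> \<in> Mor E \<and> q (act e \<alpha>) = q e) \<and>
     (\<forall>e\<in>Mor E. act e 0 = e) \<and>
     (\<forall>e\<in>Mor E. \<forall>\<alpha>\<in>pbH_obj C Hob (q e). \<forall>\<beta>\<in>pbH_obj C Hob (q e).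
        act (act e \<alpha>) \<beta> = act e (\<alpha> + \<beta>)) \<and>
     \<comment> \<open>transitively and freely\<close>
     (\<forall>e\<in>Mor E. \<forall>e'\<in>Mor E. q e = q e' \<longrightarrow> (\<exists>!\<alpha>. \<alpha> \<in> pbH_obj C Hob (q e) \<and> act e \<alpha> = e')) \<and>
     \<comment> \<open>\<open>(f\<^sub>0+\<alpha>)(g\<^sub>0+\<beta>) = f\<^sub>0g\<^sub>0 + f\<^sub>*\<beta> + g\<^sup>*\<alpha>\<close>\<close>
     (\<forall>f0\<in>Mor E. \<forall>g0\<in>Mor E. Dom E f0 = Cod E g0 \<longrightarrow>
        (\<forall>\<alpha>\<in>pbH_obj C Hob (q f0). \<forall>\<beta>\<in>pbH_obj C Hob (q g0).
           Comp E (act f0 \<alpha>) (act g0 \<beta>) =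
             act (Comp E f0 g0) (lower_star C Hm (q f0) (q g0) \<beta> + upper_star C Hm (q f0) (q g0) \<alpha>)))"

definition ext_partition :: "('o, 'e) cat \<Rightarrow> ('e \<Rightarrow> 'm) \<Rightarrow> 'm set set \<Rightarrow> 'e set set" where
  "ext_partition E q S = (\<lambda>\<sigma>. {e \<in> Mor E. q e \<in> \<sigma>}) ` S"

text \<open>Elements of \<open>K C\<close> are functions \<open>Mor C \<rightarrow> K\<close> (zero outside \<open>Mor C\<close>; \<open>Mor C\<close> finite).\<close>
definition s_elem :: "'m set \<Rightarrow> 'm \<Rightarrow> 'k::field" where
  "s_elem \<sigma> = (\<lambda>h. if h \<in> \<sigma> then 1 else 0)"

definition schemoid_algebra :: "'m set set \<Rightarrow> ('m \<Rightarrow> 'k::field) set" where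
  "schemoid_algebra S = {a. \<exists>c. a = (\<lambda>h. \<Sum>\<sigma>\<in>S. c \<sigma> * s_elem \<sigma> h)}"

definition cat_alg_mult :: "('o, 'm) cat \<Rightarrow> ('m \<Rightarrow> 'k::field) \<Rightarrow> ('m \<Rightarrow> 'k) \<Rightarrow> 'm \<Rightarrow> 'k" where
  "cat_alg_mult C a b = (\<lambda>h. \<Sum>f\<in>Mor C. \<Sum>g\<in>Mor C.
      if Dom C f = Cod C g \<and> Comp C f g = h then a f * b g else 0)"

definition q_block :: "('e \<Rightarrow> 'm) \<Rightarrow> 'm set set \<Rightarrow> 'e set \<Rightarrow> 'm set" where
  "q_block q S \<pi> = (THE \<sigma>. \<sigma> \<in> S \<and> q ` \<pi> \<subseteq> \<sigma>)"

text \<open>\<open>n\<^sup>q\<^sub>\<pi>\<^sub>~ = #{f \<in> \<pi>~ | t(f) = x, q(f) = g}\<close> for (a chosen) \<open>g \<in> q(\<pi>~)\<close>, \<open>x = t(g)\<close>.\<close>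
definition n_q :: "('o, 'm) cat \<Rightarrow> ('o, 'e) cat \<Rightarrow> ('e \<Rightarrow> 'm) \<Rightarrow> 'm set set \<Rightarrow> 'e set \<Rightarrow> nat" where
  "n_q C E q S \<pi> = (let g = (SOME g. g \<in> q_block q S \<pi>)
                    in card {f \<in> \<pi>. Cod E f = Cod C g \<and> q f = g})"

text \<open>\<open>K(q) : K(E,S~) \<rightarrow> K(C,S)\<close>, the linear map with \<open>s\<^sub>\<pi>\<^sub>~ \<mapsto> n\<^sup>q\<^sub>\<pi>\<^sub>~ s\<^sub>q\<^sub>(\<pi>\<^sub>~\<^sub>)\<close>;
  the coefficient of \<open>s\<^sub>\<pi>\<^sub>~\<close> in \<open>a\<close> is the value of \<open>a\<close> on any element of \<open>\<pi>~\<close>.\<close>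
definition K_q :: "('o, 'm) cat \<Rightarrow> ('o, 'e) cat \<Rightarrow> ('e \<Rightarrow> 'm) \<Rightarrow> 'm set set \<Rightarrow>
                   ('e \<Rightarrow> 'k::field) \<Rightarrow> 'm \<Rightarrow> 'k" where
  "K_q C E q S a = (\<lambda>h. \<Sum>\<pi>\<in>ext_partition E q S.
       a (SOME e. e \<in> \<pi>) * of_nat (n_q C E q S \<pi>) * s_elem (q_block q S \<pi>) h)"

text \<open>Isomorphism of (not necessarily unital) algebras between the given subalgebras.\<close>
definition alg_iso_between ::
  "('o, 'e) cat \<Rightarrow> ('e \<Rightarrow> 'k::field) set \<Rightarrow> ('o, 'm) cat \<Rightarrow> ('m \<Rightarrow> 'k) set \<Rightarrow>
   (('e \<Rightarrow> 'k) \<Rightarrow> ('m \<Rightarrow> 'k)) \<Rightarrow> bool" where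
  "alg_iso_between E A C B \<phi> \<longleftrightarrow> bij_betw \<phi> A B \<and>
     (\<forall>a\<in>A. \<forall>b\<in>A. \<phi> (\<lambda>h. a h + b h) = (\<lambda>h. \<phi> a h + \<phi> b h)) \<and>
     (\<forall>c. \<forall>a\<in>A. \<phi> (\<lambda>h. c * a h) = (\<lambda>h. c * \<phi> a h)) \<and>
     (\<forall>a\<in>A. \<forall>b\<in>A. \<phi> (cat_alg_mult E a b) = cat_alg_mult C (\<phi> a) (\<phi> b))"

end

(* The blocks of S~ are the full preimages q^-1(sigma), so K(E,S~) consists exactly of the
   pullbacks b o q of the elements b of K(C,S). Since D_f acts simply transitively on each fibre
   q^-1(f) and b^* is the identity for D = pi^*p^*H, a morphism e of E factors as e = a b with b
   given and a over a given f in exactly one way. Counting factorisations gives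
   (b1 o q)(b2 o q) = N (b1 b2) o q and K(q)(b o q) = N b, where N = #D_g does not depend on g
   because H sends the morphisms of the connected groupoid C to bijections. So K(q) is N times
   the inverse of pullback: an isomorphism if N is invertible in K, and zero otherwise. *)

theory Submission
  imports Defs
begin

lemma sum_s_elem_partition:
  assumes part: "is_partition M P" and fin: "finite P"
  shows "h \<in> p \<Longrightarrow> p \<in> P \<Longrightarrow> (\<Sum>p'\<in>P. c p' * (s_elem p' h :: 'k::field)) = c p"
    and "h \<notin> M \<Longrightarrow> (\<Sum>p'\<in>P. c p' * (s_elem p' h :: 'k::field)) = 0"
proof -
  assume h: "h \<in> p" and p: "p \<in> P"
  have "(\<Sum>p'\<in>P. c p' * (s_elem p' h :: 'k)) = (\<Sum>p'\<in>{p}. c p' * s_elem p' h)"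
    using part h p fin unfolding is_partition_def s_elem_def
    by (intro sum.mono_neutral_right) auto
  then show "(\<Sum>p'\<in>P. c p' * (s_elem p' h :: 'k)) = c p"
    using h by (simp add: s_elem_def)
next
  assume "h \<notin> M"
  then show "(\<Sum>p'\<in>P. c p' * (s_elem p' h :: 'k)) = 0"
    using part unfolding is_partition_def s_elem_def by (intro sum.neutral) auto
qed

lemma schemoid_algebra_iff:
  assumes part: "is_partition M P" and fin: "finite P"
  shows "(a :: 'm \<Rightarrow> 'k::field) \<in> schemoid_algebra P \<longleftrightarrow>
     (\<forall>h. h \<notin> M \<longrightarrow> a h = 0) \<and> (\<forall>p\<in>P. \<forall>x\<in>p. \<forall>y\<in>p. a x = a y)"
proof
  assume "a \<in> schemoid_algebra P"
  then obtain c where a: "a = (\<lambda>h. \<Sum>p\<in>P. c p * s_elem p h)"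
    unfolding schemoid_algebra_def by blast
  have "a x = c p" if "p \<in> P" "x \<in> p" for p x
    unfolding a by (rule sum_s_elem_partition(1)[OF part fin that(2,1)])
  then show "(\<forall>h. h \<notin> M \<longrightarrow> a h = 0) \<and> (\<forall>p\<in>P. \<forall>x\<in>p. \<forall>y\<in>p. a x = a y)"
    unfolding a using sum_s_elem_partition(2)[OF part fin] by auto
next
  assume a: "(\<forall>h. h \<notin> M \<longrightarrow> a h = 0) \<and> (\<forall>p\<in>P. \<forall>x\<in>p. \<forall>y\<in>p. a x = a y)"
  have "a h = (\<Sum>p\<in>P. a (SOME x. x \<in> p) * s_elem p h)" for h
  proof (cases "h \<in> M")
    case True
    then obtain p where p: "p \<in> P" "h \<in> p" using part unfolding is_partition_def by blast
    then have "(SOME x. x \<in> p) \<in> p" by (meson someI)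
    then show ?thesis using a p sum_s_elem_partition(1)[OF part fin p(2,1)] by metis
  next
    case False
    then show ?thesis using a sum_s_elem_partition(2)[OF part fin] by simp
  qed
  then have repr: "a = (\<lambda>h. \<Sum>p\<in>P. a (SOME x. x \<in> p) * s_elem p h)" ..
  show "a \<in> schemoid_algebra P"
    unfolding schemoid_algebra_def by (rule CollectI, rule exI, rule repr)
qed

lemma sum_if_eq_card_times:
  assumes "finite A" "finite B"
  shows "(\<Sum>x\<in>A. \<Sum>y\<in>B. if P x y then c else 0) = of_nat (card {(x, y) \<in> A \<times> B. P x y}) * (c :: 'k::semiring_1)"
proof -
  have "(\<Sum>x\<in>A. \<Sum>y\<in>B. if P x y then c else 0) = (\<Sum>p\<in>A \<times> B. if P (fst p) (snd p) then c else 0)"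
    by (subst sum.cartesian_product) (simp add: split_def)
  also have "\<dots> = (\<Sum>p\<in>{p \<in> A \<times> B. P (fst p) (snd p)}. c)"
    using assms by (simp add: sum.inter_filter[symmetric])
  also have "\<dots> = of_nat (card {p \<in> A \<times> B. P (fst p) (snd p)}) * c" by simp
  also have "{p \<in> A \<times> B. P (fst p) (snd p)} = {(x, y) \<in> A \<times> B. P x y}" by auto
  finally show ?thesis by simp
qed

lemma finite_partition:
  assumes "is_partition M P" "finite M"
  shows "finite P"
proof -
  have "P \<subseteq> Pow M" using assms(1) unfolding is_partition_def by blast
  then show ?thesis using assms(2) by (meson finite_Pow_iff finite_subset)
qed

lemma cat_alg_mult_structure_constants:
  assumes part: "is_partition (Mor C) S" and fin: "finite (Mor C)"
    and b1: "(b1 :: 'm \<Rightarrow> 'k::field) \<in> schemoid_algebra S" and b2: "b2 \<in> schemoid_algebra S"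
  shows "cat_alg_mult C b1 b2 f = (\<Sum>\<sigma>\<in>S. \<Sum>\<tau>\<in>S. of_nat (card (structure_pairs C \<sigma> \<tau> f)) *
            (b1 (SOME x. x \<in> \<sigma>) * b2 (SOME x. x \<in> \<tau>)))"
proof -
  have finS: "finite S" by (rule finite_partition[OF part fin])
  have const1: "\<forall>\<sigma>\<in>S. \<forall>x\<in>\<sigma>. \<forall>y\<in>\<sigma>. b1 x = b1 y"
    using b1 unfolding schemoid_algebra_iff[OF part finS] by (elim conjE)
  have const2: "\<forall>\<sigma>\<in>S. \<forall>x\<in>\<sigma>. \<forall>y\<in>\<sigma>. b2 x = b2 y"
    using b2 unfolding schemoid_algebra_iff[OF part finS] by (elim conjE)
  have rep: "(SOME x. x \<in> \<sigma>) \<in> \<sigma>" if "\<sigma> \<in> S" for \<sigma>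
    using part that unfolding is_partition_def by (simp add: some_in_eq)
  have disj: "\<forall>\<sigma>\<in>S. \<forall>\<tau>\<in>S. \<sigma> \<noteq> \<tau> \<longrightarrow> \<sigma> \<inter> \<tau> = {}" and cover: "Mor C = \<Union>S"
    using part unfolding is_partition_def by simp_all
  have fin_blocks: "\<forall>\<sigma>\<in>S. finite \<sigma>"
    using fin unfolding cover by (meson Union_upper finite_subset)
  let ?G = "\<lambda>f1 f2. if Dom C f1 = Cod C f2 \<and> Comp C f1 f2 = f then b1 f1 * b2 f2 else 0"
  have "cat_alg_mult C b1 b2 f = (\<Sum>\<sigma>\<in>S. \<Sum>f1\<in>\<sigma>. \<Sum>\<tau>\<in>S. \<Sum>f2\<in>\<tau>. ?G f1 f2)"
    unfolding cat_alg_mult_def cover sum.Union_disjoint[OF fin_blocks disj] comp_def ..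
  also have "\<dots> = (\<Sum>\<sigma>\<in>S. \<Sum>\<tau>\<in>S. \<Sum>f1\<in>\<sigma>. \<Sum>f2\<in>\<tau>. ?G f1 f2)"
    by (intro sum.cong refl) (rule sum.swap)
  also have "\<dots> = (\<Sum>\<sigma>\<in>S. \<Sum>\<tau>\<in>S. of_nat (card (structure_pairs C \<sigma> \<tau> f)) *
            (b1 (SOME x. x \<in> \<sigma>) * b2 (SOME x. x \<in> \<tau>)))"
  proof (intro sum.cong refl)
    fix \<sigma> \<tau> assume \<sigma>: "\<sigma> \<in> S" and \<tau>: "\<tau> \<in> S"
    have "(\<Sum>f1\<in>\<sigma>. \<Sum>f2\<in>\<tau>. ?G f1 f2) = (\<Sum>f1\<in>\<sigma>. \<Sum>f2\<in>\<tau>.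
        if Dom C f1 = Cod C f2 \<and> Comp C f1 f2 = f then b1 (SOME x. x \<in> \<sigma>) * b2 (SOME x. x \<in> \<tau>) else 0)"
    proof (intro sum.cong refl)
      fix f1 f2 assume "f1 \<in> \<sigma>" "f2 \<in> \<tau>"
      then have "b1 f1 = b1 (SOME x. x \<in> \<sigma>)" "b2 f2 = b2 (SOME x. x \<in> \<tau>)"
        using const1 const2 \<sigma> \<tau> rep[OF \<sigma>] rep[OF \<tau>] by blast+
      then show "?G f1 f2 = (if Dom C f1 = Cod C f2 \<and> Comp C f1 f2 = f
          then b1 (SOME x. x \<in> \<sigma>) * b2 (SOME x. x \<in> \<tau>) else 0)" by simp
    qed
    also have "\<dots> = of_nat (card (structure_pairs C \<sigma> \<tau> f)) * (b1 (SOME x. x \<in> \<sigma>) * b2 (SOME x. x \<in> \<tau>))"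
      unfolding structure_pairs_def using fin_blocks \<sigma> \<tau> by (intro sum_if_eq_card_times) blast+
    finally show "(\<Sum>f1\<in>\<sigma>. \<Sum>f2\<in>\<tau>. ?G f1 f2) = \<dots>" .
  qed
  finally show ?thesis .
qed

lemma quasi_schemoid_cat_alg_mult_closed:
  assumes qs: "quasi_schemoid C S" and fin: "finite (Mor C)"
    and b1: "(b1 :: 'm \<Rightarrow> 'k::field) \<in> schemoid_algebra S" and b2: "b2 \<in> schemoid_algebra S"
  shows "cat_alg_mult C b1 b2 \<in> schemoid_algebra S"
proof -
  have part: "is_partition (Mor C) S" and cat: "is_category C"
    and struct: "\<forall>\<sigma>\<in>S. \<forall>\<tau>\<in>S. \<forall>\<mu>\<in>S. \<forall>f\<in>\<mu>. \<forall>g\<in>\<mu>.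
        card (structure_pairs C \<sigma> \<tau> f) = card (structure_pairs C \<sigma> \<tau> g)"
    using qs unfolding quasi_schemoid_def by blast+
  have comp: "Comp C f g \<in> Mor C" if "f \<in> Mor C" "g \<in> Mor C" "Dom C f = Cod C g" for f g
    using cat that unfolding is_category_def by blast
  have "cat_alg_mult C b1 b2 h = 0" if "h \<notin> Mor C" for h
    using comp that unfolding cat_alg_mult_def by (intro sum.neutral ballI) auto
  moreover have "cat_alg_mult C b1 b2 x = cat_alg_mult C b1 b2 y" if "\<mu> \<in> S" "x \<in> \<mu>" "y \<in> \<mu>" for \<mu> x y
  proof -
    have "card (structure_pairs C \<sigma> \<tau> x) = card (structure_pairs C \<sigma> \<tau> y)" if "\<sigma> \<in> S" "\<tau> \<in> S" for \<sigma> \<tau>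
      using struct that \<open>\<mu> \<in> S\<close> \<open>x \<in> \<mu>\<close> \<open>y \<in> \<mu>\<close> by blast
    then show ?thesis
      unfolding cat_alg_mult_structure_constants[OF part fin b1 b2] by (intro sum.cong refl) simp
  qed
  ultimately show ?thesis
    unfolding schemoid_algebra_iff[OF part finite_partition[OF part fin]] by blast
qed

lemma schemoid_algebra_scale_closed:
  assumes "is_partition M S" "finite S" "(b :: 'm \<Rightarrow> 'k::field) \<in> schemoid_algebra S"
  shows "(\<lambda>h. c * b h) \<in> schemoid_algebra S"
  using assms(3) unfolding schemoid_algebra_iff[OF assms(1,2)] by (metis mult_zero_right)

lemma K_q_add: "K_q C E q S (\<lambda>h. a h + b h) = (\<lambda>h. K_q C E q S a h + K_q C E q S b h)"
  unfolding K_q_def by (simp add: sum.distrib distrib_right)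

lemma K_q_scale: "K_q C E q S (\<lambda>h. c * a h) = (\<lambda>h. c * K_q C E q S a h)"
  unfolding K_q_def by (simp add: sum_distrib_left mult.assoc)

lemma cat_alg_mult_scale:
  "cat_alg_mult C (\<lambda>h. c * a h) (\<lambda>h. d * b h) = (\<lambda>h. c * d * cat_alg_mult C a b h)"
  unfolding cat_alg_mult_def sum_distrib_left by (intro ext sum.cong refl) (simp add: mult_ac)

lemma module_functor_map_zero:
  assumes "module_functor scale C Hob Hm" "f \<in> Mor C" "is_category C"
  shows "Hm f 0 = 0"
proof -
  have "Dom C f \<in> Obj C" using assms(2,3) unfolding is_category_def by blast
  then have "0 \<in> Hob (Dom C f)" using assms(1) unfolding module_functor_def by blast
  then have "Hm f (0 + 0) = Hm f 0 + Hm f 0" using assms(1,2) unfolding module_functor_def by blast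
  then show ?thesis by simp
qed

lemma groupoid_module_functor_bij:
  assumes C: "is_groupoid C" and H: "module_functor scale C Hob Hm" and f: "f \<in> Mor C"
  shows "bij_betw (Hm f) (Hob (Dom C f)) (Hob (Cod C f))"
proof -
  obtain g where g: "g \<in> Mor C" "Dom C g = Cod C f" "Cod C g = Dom C f"
    "Comp C g f = Ide C (Dom C f)" "Comp C f g = Ide C (Cod C f)"
    using C f unfolding is_groupoid_def by blast
  have cat: "is_category C" using C unfolding is_groupoid_def by blast
  have maps: "\<And>h a. h \<in> Mor C \<Longrightarrow> a \<in> Hob (Dom C h) \<Longrightarrow> Hm h a \<in> Hob (Cod C h)"
    and ide: "\<And>x a. x \<in> Obj C \<Longrightarrow> a \<in> Hob x \<Longrightarrow> Hm (Ide C x) a = a"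
    and comp: "\<And>h k a. h \<in> Mor C \<Longrightarrow> k \<in> Mor C \<Longrightarrow> Dom C h = Cod C k \<Longrightarrow> a \<in> Hob (Dom C k) \<Longrightarrow>
        Hm (Comp C h k) a = Hm h (Hm k a)"
    using H unfolding module_functor_def by blast+
  have obj: "Dom C f \<in> Obj C" "Cod C f \<in> Obj C" using cat f unfolding is_category_def by blast+
  show ?thesis
  proof (rule bij_betw_byWitness[where f' = "Hm g"])
    show "\<forall>a\<in>Hob (Dom C f). Hm g (Hm f a) = a"
      using comp[OF g(1) f g(2)] ide[OF obj(1)] g(4) by simp
    show "\<forall>a\<in>Hob (Cod C f). Hm f (Hm g a) = a"
      using comp[OF f g(1) g(3)[symmetric]] ide[OF obj(2)] g(2,5) by simp
    show "Hm f ` Hob (Dom C f) \<subseteq> Hob (Cod C f)" using maps[OF f] by blast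
    show "Hm g ` Hob (Cod C f) \<subseteq> Hob (Dom C f)" using maps[OF g(1)] g(2,3) by auto
  qed
qed

lemma connected_groupoid_module_functor_card:
  assumes C: "is_groupoid C" "connected_cat C" and H: "module_functor scale C Hob Hm"
    and x: "x \<in> Obj C" and y: "y \<in> Obj C"
  shows "card (Hob y) = card (Hob x)"
proof -
  let ?R = "{(Dom C f, Cod C f) | f. f \<in> Mor C} \<union> {(Cod C f, Dom C f) | f. f \<in> Mor C}"
  have "(x, y) \<in> ?R\<^sup>*" using C(2) x y unfolding connected_cat_def by blast
  then show ?thesis
  proof (induction rule: rtrancl_induct)
    case (step y z)
    then show ?case
      using bij_betw_same_card[OF groupoid_module_functor_bij[OF C(1) H]] by auto
  qed simp
qed

locale schemoid_linear_extension =
  fixes C :: "('o, 'm) cat" and S :: "'m set set"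
    and Hob :: "'o \<Rightarrow> 'v::ab_group_add set" and Hm :: "'m \<Rightarrow> 'v \<Rightarrow> 'v"
    and E :: "('o, 'e) cat" and q :: "'e \<Rightarrow> 'm" and act :: "'e \<Rightarrow> 'v \<Rightarrow> 'e"
    and n :: nat
  assumes quasi_schemoid: "quasi_schemoid C S"
    and finite_Mor: "finite (Mor C)"
    and Hob_zero: "\<And>x. x \<in> Obj C \<Longrightarrow> 0 \<in> Hob x"
    and Hm_zero: "\<And>f. f \<in> Mor C \<Longrightarrow> Hm f 0 = 0"
    and Hm_ide: "\<And>x a. x \<in> Obj C \<Longrightarrow> a \<in> Hob x \<Longrightarrow> Hm (Ide C x) a = a"
    and linear_extension: "linear_extension C Hob Hm E q act"
    and finite_D: "\<And>g. g \<in> Mor C \<Longrightarrow> finite (pbH_obj C Hob g)"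
    and card_D: "\<And>g. g \<in> Mor C \<Longrightarrow> card (pbH_obj C Hob g) = n"
begin

lemma category: "is_category C" and partition: "is_partition (Mor C) S"
  using quasi_schemoid unfolding quasi_schemoid_def by blast+

lemma finite_S: "finite S"
  using finite_partition[OF partition finite_Mor] .

lemma cod_mor: "f \<in> Mor C \<Longrightarrow> Cod C f \<in> Obj C"
  using category unfolding is_category_def by blast

lemma cod_comp: "f \<in> Mor C \<Longrightarrow> g \<in> Mor C \<Longrightarrow> Dom C f = Cod C g \<Longrightarrow> Cod C (Comp C f g) = Cod C f"
  using category unfolding is_category_def by blast

lemma q_mor: "e \<in> Mor E \<Longrightarrow> q e \<in> Mor C \<and> Dom C (q e) = Dom E e \<and> Cod C (q e) = Cod E e"
  using linear_extension unfolding linear_extension_def by (elim conjE) blast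

lemma q_comp: "a \<in> Mor E \<Longrightarrow> b \<in> Mor E \<Longrightarrow> Dom E a = Cod E b \<Longrightarrow> q (Comp E a b) = Comp C (q a) (q b)"
  using linear_extension unfolding linear_extension_def by (elim conjE) blast

lemma q_surj: "f \<in> Mor C \<Longrightarrow> \<exists>e\<in>Mor E. q e = f"
proof -
  have "\<forall>f\<in>Mor C. \<exists>e\<in>Mor E. Dom E e = Dom C f \<and> Cod E e = Cod C f \<and> q e = f"
    using linear_extension unfolding linear_extension_def by (elim conjE) assumption
  then show "f \<in> Mor C \<Longrightarrow> \<exists>e\<in>Mor E. q e = f" by blast
qed

lemma comp_E_mor: "a \<in> Mor E \<Longrightarrow> b \<in> Mor E \<Longrightarrow> Dom E a = Cod E b \<Longrightarrow> Comp E a b \<in> Mor E"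
proof -
  have "is_category E" using linear_extension unfolding linear_extension_def by blast
  then show "a \<in> Mor E \<Longrightarrow> b \<in> Mor E \<Longrightarrow> Dom E a = Cod E b \<Longrightarrow> Comp E a b \<in> Mor E"
    unfolding is_category_def by blast
qed

lemma act_mor: "e \<in> Mor E \<Longrightarrow> \<alpha> \<in> Hob (Cod C (q e)) \<Longrightarrow> act e \<alpha> \<in> Mor E \<and> q (act e \<alpha>) = q e"
  using linear_extension unfolding linear_extension_def pbH_obj_def by (elim conjE) blast

lemma act_zero: "e \<in> Mor E \<Longrightarrow> act e 0 = e"
  using linear_extension unfolding linear_extension_def by (elim conjE) blast

lemma act_simply_transitive:
  "e \<in> Mor E \<Longrightarrow> e' \<in> Mor E \<Longrightarrow> q e = q e' \<Longrightarrow> \<exists>!\<alpha>. \<alpha> \<in> Hob (Cod C (q e)) \<and> act e \<alpha> = e'"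
  using linear_extension unfolding linear_extension_def pbH_obj_def by (elim conjE) blast

lemma comp_act:
  "a \<in> Mor E \<Longrightarrow> b \<in> Mor E \<Longrightarrow> Dom E a = Cod E b \<Longrightarrow>
   \<alpha> \<in> Hob (Cod C (q a)) \<Longrightarrow> \<beta> \<in> Hob (Cod C (q b)) \<Longrightarrow>
   Comp E (act a \<alpha>) (act b \<beta>) =
     act (Comp E a b) (lower_star C Hm (q a) (q b) \<beta> + upper_star C Hm (q a) (q b) \<alpha>)"
  using linear_extension unfolding linear_extension_def pbH_obj_def by (elim conjE) blast

definition fibre :: "'m \<Rightarrow> 'e set" where
  "fibre g = {e \<in> Mor E. q e = g}"

lemma fibre_bij:
  assumes e0: "e0 \<in> fibre g"
  shows "bij_betw (act e0) (Hob (Cod C g)) (fibre g)"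
proof -
  have e0E: "e0 \<in> Mor E" and qe0: "q e0 = g" using e0 unfolding fibre_def by auto
  have maps: "act e0 \<alpha> \<in> fibre g" if "\<alpha> \<in> Hob (Cod C g)" for \<alpha>
    using act_mor[OF e0E] that qe0 unfolding fibre_def by simp
  have ex1: "\<exists>!\<alpha>. \<alpha> \<in> Hob (Cod C g) \<and> act e0 \<alpha> = e" if "e \<in> fibre g" for e
    using act_simply_transitive[OF e0E, of e] that qe0 unfolding fibre_def by simp
  show ?thesis
    unfolding bij_betw_def
  proof
    show "inj_on (act e0) (Hob (Cod C g))"
      using maps ex1 by (intro inj_onI) metis
    show "act e0 ` Hob (Cod C g) = fibre g"
      using maps ex1 by blast
  qed
qed

lemma finite_fibre: "g \<in> Mor C \<Longrightarrow> finite (fibre g)"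
  and card_fibre: "g \<in> Mor C \<Longrightarrow> card (fibre g) = n"
proof -
  assume g: "g \<in> Mor C"
  then obtain e0 where "e0 \<in> fibre g" using q_surj unfolding fibre_def by blast
  then have bij: "bij_betw (act e0) (Hob (Cod C g)) (fibre g)" by (rule fibre_bij)
  show "finite (fibre g)" using bij finite_D[OF g] by (simp add: bij_betw_finite pbH_obj_def)
  show "card (fibre g) = n" using bij_betw_same_card[OF bij] card_D[OF g] by (simp add: pbH_obj_def)
qed

lemma finite_Mor_E: "finite (Mor E)"
proof (rule finite_subset)
  show "Mor E \<subseteq> (\<Union>g\<in>Mor C. fibre g)" using q_mor unfolding fibre_def by auto
  show "finite (\<Union>g\<in>Mor C. fibre g)" using finite_Mor finite_fibre by blast
qed

lemma sum_Mor_E_by_fibres: "(\<Sum>e\<in>Mor E. F e) = (\<Sum>g\<in>Mor C. \<Sum>e\<in>fibre g. F e)"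
  unfolding fibre_def using q_mor by (intro sum.group[OF finite_Mor_E finite_Mor, symmetric]) auto

text \<open>Translating a left factor by \<open>\<alpha>\<close> translates the composite by \<open>\<alpha>\<close>, since
  \<open>(a + \<alpha>) b = ab + a\<^sub>*0 + b\<^sup>*\<alpha>\<close> and \<open>b\<^sup>*\<close> is an identity for \<open>D = \<pi>\<^sup>*p\<^sup>*H\<close>.\<close>
lemma unique_left_factor:
  assumes f: "f \<in> Mor C" and b: "b \<in> Mor E" and dom: "Dom C f = Cod E b"
    and e: "e \<in> Mor E" and qe: "q e = Comp C f (q b)"
  shows "\<exists>!a. a \<in> fibre f \<and> Comp E a b = e"
proof -
  obtain a0 where a0: "a0 \<in> Mor E" "q a0 = f" using q_surj[OF f] by blast
  have dom_a0: "Dom E a0 = Cod E b" using q_mor[OF a0(1)] a0(2) dom by simp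
  define e0 where "e0 = Comp E a0 b"
  have e0: "e0 \<in> Mor E" "q e0 = q e"
    unfolding e0_def using comp_E_mor[OF a0(1) b dom_a0] q_comp[OF a0(1) b dom_a0] a0(2) qe by auto
  have cod_e0: "Cod C (q e0) = Cod C f"
    using e0(2) qe cod_comp[OF f] q_mor[OF b] dom by simp
  have translate: "Comp E (act a0 \<alpha>) b = act e0 \<alpha>" if \<alpha>: "\<alpha> \<in> Hob (Cod C f)" for \<alpha>
  proof -
    have "0 \<in> Hob (Cod C (q b))" using Hob_zero cod_mor q_mor[OF b] by blast
    then have "Comp E (act a0 \<alpha>) (act b 0) =
        act e0 (lower_star C Hm (q a0) (q b) 0 + upper_star C Hm (q a0) (q b) \<alpha>)"
      unfolding e0_def using comp_act[OF a0(1) b dom_a0] \<alpha> a0(2) by simp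
    then show ?thesis
      using act_zero[OF b] Hm_zero[OF f] Hm_ide[OF cod_mor[OF f] \<alpha>] a0(2)
      unfolding lower_star_def upper_star_def pbH_map_def by simp
  qed
  obtain \<gamma> where \<gamma>: "\<gamma> \<in> Hob (Cod C f)" "act e0 \<gamma> = e"
    and \<gamma>_unique: "\<And>\<alpha>. \<alpha> \<in> Hob (Cod C f) \<Longrightarrow> act e0 \<alpha> = e \<Longrightarrow> \<alpha> = \<gamma>"
    using act_simply_transitive[OF e0(1) e e0(2)] cod_e0 by auto
  show ?thesis
  proof (rule ex1I[where a = "act a0 \<gamma>"])
    show "act a0 \<gamma> \<in> fibre f \<and> Comp E (act a0 \<gamma>) b = e"
      using act_mor[OF a0(1)] \<gamma> a0(2) translate[OF \<gamma>(1)] unfolding fibre_def by simp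
  next
    fix a assume a: "a \<in> fibre f \<and> Comp E a b = e"
    then obtain \<alpha> where \<alpha>: "\<alpha> \<in> Hob (Cod C f)" "act a0 \<alpha> = a"
      using act_simply_transitive[OF a0(1)] a0(2) unfolding fibre_def by force
    then show "a = act a0 \<gamma>" using \<gamma>_unique translate a by metis
  qed
qed

definition pullback :: "('m \<Rightarrow> 'k::zero) \<Rightarrow> 'e \<Rightarrow> 'k" where
  "pullback b e = (if e \<in> Mor E then b (q e) else 0)"

lemma sum_fibre_left_factors:
  assumes f: "f \<in> Mor C" and b: "b \<in> Mor E" and e: "e \<in> Mor E"
  shows "(\<Sum>a\<in>fibre f. if Dom E a = Cod E b \<and> Comp E a b = e then x else 0)
       = (if Dom C f = Cod C (q b) \<and> Comp C f (q b) = q e then x else (0::'k::comm_monoid_add))"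
proof (cases "Dom C f = Cod C (q b) \<and> Comp C f (q b) = q e")
  case True
  then have "\<exists>!a. a \<in> fibre f \<and> Comp E a b = e"
    using unique_left_factor[OF f b _ e] q_mor[OF b] by simp
  then obtain a0 where a0: "a0 \<in> fibre f" "Comp E a0 b = e"
    and uniq: "\<And>a. a \<in> fibre f \<Longrightarrow> Comp E a b = e \<Longrightarrow> a = a0"
    by (elim ex1E) blast
  have dom: "Dom E a = Cod E b" if "a \<in> fibre f" for a
    using that True q_mor b unfolding fibre_def by auto
  have "(\<Sum>a\<in>fibre f. if Dom E a = Cod E b \<and> Comp E a b = e then x else 0)
      = (\<Sum>a\<in>fibre f. if a = a0 then x else 0)"
    using a0 uniq dom by (intro sum.cong refl) (metis (full_types))
  also have "\<dots> = x" using a0(1) finite_fibre[OF f] by simp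
  finally show ?thesis using True by simp
next
  case False
  have "\<not> (Dom E a = Cod E b \<and> Comp E a b = e)" if "a \<in> fibre f" for a
    using that False q_comp[of a b] q_mor[of a] q_mor[OF b] b unfolding fibre_def by auto
  then have "(\<Sum>a\<in>fibre f. if Dom E a = Cod E b \<and> Comp E a b = e then x else 0) = 0"
    by (intro sum.neutral ballI) auto
  then show ?thesis unfolding if_not_P[OF False] .
qed

lemma cat_alg_mult_pullback_in_Mor:
  assumes e: "e \<in> Mor E"
  shows "cat_alg_mult E (pullback b1) (pullback b2) e = of_nat n * cat_alg_mult C b1 b2 (q e :: 'm)"
proof -
  let ?G = "\<lambda>f g. if Dom C f = Cod C g \<and> Comp C f g = q e then b1 f * b2 g else 0"
  have "cat_alg_mult E (pullback b1) (pullback b2) e =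
     (\<Sum>b\<in>Mor E. \<Sum>a\<in>Mor E. if Dom E a = Cod E b \<and> Comp E a b = e then b1 (q a) * b2 (q b) else 0)"
    unfolding cat_alg_mult_def pullback_def by (subst sum.swap) (intro sum.cong refl, simp)
  also have "\<dots> = (\<Sum>b\<in>Mor E. \<Sum>f\<in>Mor C. ?G f (q b))"
  proof (intro sum.cong refl)
    fix b assume b: "b \<in> Mor E"
    have "(\<Sum>a\<in>Mor E. if Dom E a = Cod E b \<and> Comp E a b = e then b1 (q a) * b2 (q b) else 0)
        = (\<Sum>f\<in>Mor C. \<Sum>a\<in>fibre f. if Dom E a = Cod E b \<and> Comp E a b = e then b1 f * b2 (q b) else 0)"
      unfolding sum_Mor_E_by_fibres by (intro sum.cong refl) (simp add: fibre_def)
    also have "\<dots> = (\<Sum>f\<in>Mor C. ?G f (q b))"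
      by (intro sum.cong refl) (rule sum_fibre_left_factors[OF _ b e])
    finally show "(\<Sum>a\<in>Mor E. if Dom E a = Cod E b \<and> Comp E a b = e then b1 (q a) * b2 (q b) else 0)
        = (\<Sum>f\<in>Mor C. ?G f (q b))" .
  qed
  also have "\<dots> = (\<Sum>g\<in>Mor C. \<Sum>b\<in>fibre g. \<Sum>f\<in>Mor C. ?G f g)"
    unfolding sum_Mor_E_by_fibres by (intro sum.cong refl) (simp add: fibre_def)
  also have "\<dots> = (\<Sum>g\<in>Mor C. of_nat n * (\<Sum>f\<in>Mor C. ?G f g))"
    using card_fibre by (intro sum.cong refl) simp
  also have "\<dots> = of_nat n * cat_alg_mult C b1 b2 (q e)"
    unfolding cat_alg_mult_def sum_distrib_left by (rule sum.swap)
  finally show ?thesis .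
qed

lemma cat_alg_mult_pullback:
  "cat_alg_mult E (pullback b1) (pullback b2) = pullback (\<lambda>h. of_nat n * cat_alg_mult C b1 b2 (h :: 'm))"
proof
  fix e
  have "cat_alg_mult E x y e = 0" if "e \<notin> Mor E" for x y :: "'e \<Rightarrow> 'k::field"
    using that comp_E_mor unfolding cat_alg_mult_def by (intro sum.neutral ballI) auto
  then show "cat_alg_mult E (pullback b1) (pullback b2) e = pullback (\<lambda>h. of_nat n * cat_alg_mult C b1 b2 h) e"
    using cat_alg_mult_pullback_in_Mor unfolding pullback_def by auto
qed

definition block_preimage :: "'m set \<Rightarrow> 'e set" where
  "block_preimage \<sigma> = {e \<in> Mor E. q e \<in> \<sigma>}"

lemma ext_partition_eq: "ext_partition E q S = block_preimage ` S"
  unfolding ext_partition_def block_preimage_def ..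

lemma block_sub: "\<sigma> \<in> S \<Longrightarrow> \<sigma> \<subseteq> Mor C"
  and block_nonempty: "\<sigma> \<in> S \<Longrightarrow> \<sigma> \<noteq> {}"
  and block_disjoint: "\<sigma> \<in> S \<Longrightarrow> \<tau> \<in> S \<Longrightarrow> \<sigma> \<noteq> \<tau> \<Longrightarrow> \<sigma> \<inter> \<tau> = {}"
  and block_cover: "f \<in> Mor C \<Longrightarrow> \<exists>\<sigma>\<in>S. f \<in> \<sigma>"
  using partition unfolding is_partition_def by blast+

lemma image_block_preimage: "\<sigma> \<in> S \<Longrightarrow> q ` block_preimage \<sigma> = \<sigma>"
  using block_sub q_surj unfolding block_preimage_def by fastforce

lemma inj_on_block_preimage: "inj_on block_preimage S"
  by (metis image_block_preimage inj_onI)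

lemma is_partition_ext_partition: "is_partition (Mor E) (ext_partition E q S)"
  unfolding is_partition_def ext_partition_eq
proof (intro conjI ballI impI)
  show "\<pi> \<noteq> {}" if "\<pi> \<in> block_preimage ` S" for \<pi>
    using that image_block_preimage block_nonempty by fastforce
  show "\<Union> (block_preimage ` S) = Mor E"
    using q_mor block_cover unfolding block_preimage_def by fastforce
  show "\<pi> \<inter> \<pi>' = {}" if "\<pi> \<in> block_preimage ` S" "\<pi>' \<in> block_preimage ` S" "\<pi> \<noteq> \<pi>'" for \<pi> \<pi>'
    using that block_disjoint unfolding block_preimage_def by blast
qed

lemma finite_ext_partition: "finite (ext_partition E q S)"
  unfolding ext_partition_eq using finite_S by simp

lemma ext_schemoid_algebra_iff:
  "(a :: 'e \<Rightarrow> 'k::field) \<in> schemoid_algebra (ext_partition E q S) \<longleftrightarrow>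
     (\<forall>e. e \<notin> Mor E \<longrightarrow> a e = 0) \<and>
     (\<forall>\<sigma>\<in>S. \<forall>x\<in>block_preimage \<sigma>. \<forall>y\<in>block_preimage \<sigma>. a x = a y)"
  using schemoid_algebra_iff[OF is_partition_ext_partition finite_ext_partition, of a]
  unfolding ext_partition_eq by blast

lemma pullback_in_ext_schemoid_algebra:
  assumes b: "(b :: 'm \<Rightarrow> 'k::field) \<in> schemoid_algebra S"
  shows "pullback b \<in> schemoid_algebra (ext_partition E q S)"
proof -
  have b_const: "\<forall>\<sigma>\<in>S. \<forall>x\<in>\<sigma>. \<forall>y\<in>\<sigma>. b x = b y"
    using b unfolding schemoid_algebra_iff[OF partition finite_S] by blast
  have "pullback b x = pullback b y" if "\<sigma> \<in> S" "x \<in> block_preimage \<sigma>" "y \<in> block_preimage \<sigma>" for \<sigma> x y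
  proof -
    have "x \<in> Mor E" "y \<in> Mor E" "b (q x) = b (q y)"
      using b_const that unfolding block_preimage_def by blast+
    then show ?thesis unfolding pullback_def by simp
  qed
  moreover have "pullback b e = 0" if "e \<notin> Mor E" for e using that unfolding pullback_def by simp
  ultimately show ?thesis unfolding ext_schemoid_algebra_iff by blast
qed

lemma ext_schemoid_algebra_pullback:
  assumes a: "(a :: 'e \<Rightarrow> 'k::field) \<in> schemoid_algebra (ext_partition E q S)"
  shows "\<exists>b\<in>schemoid_algebra S. a = pullback b"
proof -
  have a_out: "\<And>e. e \<notin> Mor E \<Longrightarrow> a e = 0"
    and a_const: "\<And>\<sigma> x y. \<sigma> \<in> S \<Longrightarrow> x \<in> block_preimage \<sigma> \<Longrightarrow> y \<in> block_preimage \<sigma> \<Longrightarrow> a x = a y"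
    using a unfolding ext_schemoid_algebra_iff by blast+
  define r where "r h = (SOME e. e \<in> Mor E \<and> q e = h)" for h
  have r: "r h \<in> Mor E \<and> q (r h) = h" if "h \<in> Mor C" for h
    using q_surj[OF that] unfolding r_def by (metis (mono_tags, lifting) someI_ex)
  define b where "b h = (if h \<in> Mor C then a (r h) else 0)" for h
  have "b \<in> schemoid_algebra S"
    unfolding schemoid_algebra_iff[OF partition finite_S]
  proof (intro conjI allI impI ballI)
    show "b h = 0" if "h \<notin> Mor C" for h using that unfolding b_def by simp
    show "b x = b y" if \<sigma>: "\<sigma> \<in> S" and xy: "x \<in> \<sigma>" "y \<in> \<sigma>" for \<sigma> x y
    proof -
      have "x \<in> Mor C" "y \<in> Mor C" using block_sub[OF \<sigma>] xy by auto
      moreover have "r x \<in> block_preimage \<sigma>" "r y \<in> block_preimage \<sigma>"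
        using r calculation xy unfolding block_preimage_def by auto
      ultimately show ?thesis using a_const[OF \<sigma>, of "r x" "r y"] unfolding b_def by simp
    qed
  qed
  moreover have "a = pullback b"
  proof
    fix e show "a e = pullback b e"
    proof (cases "e \<in> Mor E")
      case True
      then have qe: "q e \<in> Mor C" using q_mor by blast
      then obtain \<sigma> where \<sigma>: "\<sigma> \<in> S" "q e \<in> \<sigma>" using block_cover by blast
      then have "e \<in> block_preimage \<sigma>" "r (q e) \<in> block_preimage \<sigma>"
        using True r[OF qe] unfolding block_preimage_def by auto
      then show ?thesis using a_const[OF \<sigma>(1), of e "r (q e)"] True qe unfolding pullback_def b_def by simp
    qed (simp add: a_out pullback_def)
  qed
  ultimately show ?thesis by blast
qed

lemma schemoid_algebra_ext_partition:
  "(schemoid_algebra (ext_partition E q S) :: ('e \<Rightarrow> 'k::field) set) = pullback ` schemoid_algebra S"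
  using ext_schemoid_algebra_pullback pullback_in_ext_schemoid_algebra by blast

lemma q_block_block_preimage: "\<sigma> \<in> S \<Longrightarrow> q_block q S (block_preimage \<sigma>) = \<sigma>"
  unfolding q_block_def image_block_preimage
  by (rule the_equality) (use block_nonempty block_disjoint in blast)+

lemma n_q_block_preimage: "\<sigma> \<in> S \<Longrightarrow> n_q C E q S (block_preimage \<sigma>) = n"
proof -
  assume \<sigma>: "\<sigma> \<in> S"
  define g where "g = (SOME g. g \<in> \<sigma>)"
  have g: "g \<in> \<sigma>" unfolding g_def using block_nonempty[OF \<sigma>] by (simp add: some_in_eq)
  have "{e \<in> block_preimage \<sigma>. Cod E e = Cod C g \<and> q e = g} = fibre g"
    unfolding block_preimage_def fibre_def using g q_mor by auto
  then show ?thesis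
    unfolding n_q_def Let_def q_block_block_preimage[OF \<sigma>] g_def[symmetric]
    using card_fibre block_sub[OF \<sigma>] g by auto
qed

lemma K_q_pullback:
  assumes b: "(b :: 'm \<Rightarrow> 'k::field) \<in> schemoid_algebra S"
  shows "K_q C E q S (pullback b) = (\<lambda>h. of_nat n * b h)"
proof
  fix h
  have b_out: "\<And>h. h \<notin> Mor C \<Longrightarrow> b h = 0" and b_const: "\<forall>\<sigma>\<in>S. \<forall>x\<in>\<sigma>. \<forall>y\<in>\<sigma>. b x = b y"
    using b unfolding schemoid_algebra_iff[OF partition finite_S] by blast+
  have pullback_rep: "pullback b (SOME e. e \<in> block_preimage \<sigma>) = b x" if "\<sigma> \<in> S" "x \<in> \<sigma>" for \<sigma> x
  proof -
    let ?e = "SOME e. e \<in> block_preimage \<sigma>"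
    have "?e \<in> block_preimage \<sigma>"
      using image_block_preimage[OF that(1)] that(2) by (metis empty_iff image_empty some_in_eq)
    then have "?e \<in> Mor E" "b (q ?e) = b x"
      using b_const that unfolding block_preimage_def by blast+
    then show ?thesis unfolding pullback_def by simp
  qed
  let ?c = "\<lambda>\<sigma>. pullback b (SOME e. e \<in> block_preimage \<sigma>) * of_nat n"
  have "K_q C E q S (pullback b) h = (\<Sum>\<sigma>\<in>S. ?c \<sigma> * s_elem \<sigma> h)"
    unfolding K_q_def ext_partition_eq sum.reindex[OF inj_on_block_preimage] comp_def
    by (intro sum.cong refl) (simp add: q_block_block_preimage n_q_block_preimage)
  also have "\<dots> = of_nat n * b h"
  proof (cases "h \<in> Mor C")
    case True
    then obtain \<sigma> where \<sigma>: "\<sigma> \<in> S" "h \<in> \<sigma>" using block_cover by blast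
    have "(\<Sum>\<sigma>\<in>S. ?c \<sigma> * s_elem \<sigma> h) = ?c \<sigma>"
      by (rule sum_s_elem_partition(1)[OF partition finite_S \<sigma>(2,1)])
    then show ?thesis using pullback_rep[OF \<sigma>] by simp
  next
    case False
    then show ?thesis using sum_s_elem_partition(2)[OF partition finite_S] b_out by simp
  qed
  finally show "K_q C E q S (pullback b) h = of_nat n * b h" .
qed

lemma K_q_mult:
  assumes a: "(a :: 'e \<Rightarrow> 'k::field) \<in> schemoid_algebra (ext_partition E q S)"
    and b: "b \<in> schemoid_algebra (ext_partition E q S)"
  shows "K_q C E q S (cat_alg_mult E a b) = cat_alg_mult C (K_q C E q S a) (K_q C E q S b)"
proof -
  obtain a' b' where a': "a' \<in> schemoid_algebra S" "a = pullback a'" and b': "b' \<in> schemoid_algebra S" "b = pullback b'"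
    using a b unfolding schemoid_algebra_ext_partition by blast
  have "(\<lambda>h. of_nat n * cat_alg_mult C a' b' h) \<in> schemoid_algebra S"
    using quasi_schemoid_cat_alg_mult_closed[OF quasi_schemoid finite_Mor a'(1) b'(1)]
    by (rule schemoid_algebra_scale_closed[OF partition finite_S])
  then show ?thesis
    unfolding a'(2) b'(2) cat_alg_mult_pullback K_q_pullback[OF a'(1)] K_q_pullback[OF b'(1)] cat_alg_mult_scale
    by (simp add: K_q_pullback mult_ac)
qed

lemma bij_betw_K_q:
  assumes n: "of_nat n \<noteq> (0 :: 'k::field)"
  shows "bij_betw (K_q C E q S :: ('e \<Rightarrow> 'k) \<Rightarrow> 'm \<Rightarrow> 'k)
           (schemoid_algebra (ext_partition E q S)) (schemoid_algebra S)"
  unfolding schemoid_algebra_ext_partition bij_betw_def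
proof
  show "inj_on (K_q C E q S) (pullback ` schemoid_algebra S :: ('e \<Rightarrow> 'k) set)"
  proof (rule inj_onI)
    fix a1 a2 :: "'e \<Rightarrow> 'k"
    assume "a1 \<in> pullback ` schemoid_algebra S" "a2 \<in> pullback ` schemoid_algebra S"
      and eq: "K_q C E q S a1 = K_q C E q S a2"
    then obtain b1 b2 where b: "b1 \<in> schemoid_algebra S" "b2 \<in> schemoid_algebra S"
      and a: "a1 = pullback b1" "a2 = pullback b2" by blast
    have "(\<lambda>h. of_nat n * b1 h) = (\<lambda>h. of_nat n * b2 h)"
      using eq unfolding a K_q_pullback[OF b(1)] K_q_pullback[OF b(2)] .
    then have "b1 = b2" using n by (simp add: fun_eq_iff)
    then show "a1 = a2" unfolding a by simp
  qed
  show "K_q C E q S ` pullback ` schemoid_algebra S = (schemoid_algebra S :: ('m \<Rightarrow> 'k) set)"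
  proof (intro equalityI subsetI)
    fix b :: "'m \<Rightarrow> 'k" assume "b \<in> K_q C E q S ` pullback ` schemoid_algebra S"
    then obtain b' where b': "b' \<in> schemoid_algebra S" "b = K_q C E q S (pullback b')" by blast
    show "b \<in> schemoid_algebra S"
      unfolding b'(2) K_q_pullback[OF b'(1)] by (rule schemoid_algebra_scale_closed[OF partition finite_S b'(1)])
  next
    fix b :: "'m \<Rightarrow> 'k" assume b: "b \<in> schemoid_algebra S"
    let ?b = "\<lambda>h. inverse (of_nat n) * b h"
    have "?b \<in> schemoid_algebra S" by (rule schemoid_algebra_scale_closed[OF partition finite_S b])
    moreover have "K_q C E q S (pullback ?b) = b"
      unfolding K_q_pullback[OF calculation] using n by (simp add: mult.assoc[symmetric])
    ultimately show "b \<in> K_q C E q S ` pullback ` schemoid_algebra S" by (metis image_eqI)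
  qed
qed

lemma alg_iso_K_q:
  assumes "of_nat n \<noteq> (0 :: 'k::field)"
  shows "alg_iso_between E (schemoid_algebra (ext_partition E q S)) C (schemoid_algebra S)
           (K_q C E q S :: ('e \<Rightarrow> 'k) \<Rightarrow> 'm \<Rightarrow> 'k)"
  unfolding alg_iso_between_def using bij_betw_K_q[OF assms] K_q_add K_q_scale K_q_mult by blast

lemma K_q_eq_zero:
  assumes "of_nat n = (0 :: 'k::field)" and "(a :: 'e \<Rightarrow> 'k) \<in> schemoid_algebra (ext_partition E q S)"
  shows "K_q C E q S a = (\<lambda>_. 0)"
proof -
  obtain b where "b \<in> schemoid_algebra S" "a = pullback b"
    using assms(2) unfolding schemoid_algebra_ext_partition by blast
  then show ?thesis using assms(1) by (simp add: K_q_pullback)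
qed

lemma not_alg_iso_K_q:
  assumes n: "of_nat n = (0 :: 'k::field)" and "Mor C \<noteq> {}"
  shows "\<not> alg_iso_between E (schemoid_algebra (ext_partition E q S)) C (schemoid_algebra S)
           (K_q C E q S :: ('e \<Rightarrow> 'k) \<Rightarrow> 'm \<Rightarrow> 'k)"
proof
  let ?one = "\<lambda>h. if h \<in> Mor C then 1 else 0 :: 'k"
  have "?one \<in> schemoid_algebra S"
    unfolding schemoid_algebra_iff[OF partition finite_S]
  proof (intro conjI allI impI ballI)
    show "?one x = ?one y" if "\<sigma> \<in> S" "x \<in> \<sigma>" "y \<in> \<sigma>" for \<sigma> x y
      using block_sub that by auto
  qed simp
  moreover assume "alg_iso_between E (schemoid_algebra (ext_partition E q S)) C (schemoid_algebra S)
           (K_q C E q S :: ('e \<Rightarrow> 'k) \<Rightarrow> 'm \<Rightarrow> 'k)"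
  then have "K_q C E q S ` schemoid_algebra (ext_partition E q S) = (schemoid_algebra S :: ('m \<Rightarrow> 'k) set)"
    unfolding alg_iso_between_def bij_betw_def by (elim conjE)
  ultimately have "?one \<in> K_q C E q S ` schemoid_algebra (ext_partition E q S)" by simp
  then obtain a where a: "a \<in> schemoid_algebra (ext_partition E q S)" "?one = K_q C E q S a" ..
  obtain f where f: "f \<in> Mor C" using assms(2) by blast
  show False using fun_cong[OF a(2), of f] K_q_eq_zero[OF n a(1)] f by simp
qed

end

theorem corollary6p13:
  fixes C :: "('o, 'm) cat" and S :: "'m set set"
    and To :: "'o \<Rightarrow> 'o" and T :: "'m \<Rightarrow> 'm"
    and scale :: "'k::field \<Rightarrow> 'v::ab_group_add \<Rightarrow> 'v"
    and Hob :: "'o \<Rightarrow> 'v set" and Hm :: "'m \<Rightarrow> 'v \<Rightarrow> 'v"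
    and E :: "('o, 'e) cat" and q :: "'e \<Rightarrow> 'm" and act :: "'e \<Rightarrow> 'v \<Rightarrow> 'e"
  assumes schemoid: "finite_basic_association_schemoid C S To T"
    and conn: "connected_cat C"
    and T_inv: "\<forall>f\<in>Mor C. Dom C (T f) = Cod C f \<and> Cod C (T f) = Dom C f \<and>
                   Comp C (T f) f = Ide C (Dom C f) \<and> Comp C f (T f) = Ide C (Cod C f)"
    and H: "module_functor scale C Hob Hm"
    and D_fin: "\<forall>g\<in>Mor C. finite (pbH_obj C Hob g)"
    and ext: "linear_extension C Hob Hm E q act"
  shows "(alg_iso_between E (schemoid_algebra (ext_partition E q S)) C (schemoid_algebra S)
            (K_q C E q S :: ('e \<Rightarrow> 'k) \<Rightarrow> 'm \<Rightarrow> 'k)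
          \<longleftrightarrow> (\<forall>g\<in>Mor C. \<not> CHAR('k) dvd card (pbH_obj C Hob g)))
       \<and> ((\<exists>g\<in>Mor C. CHAR('k) dvd card (pbH_obj C Hob g)) \<longrightarrow>
            (\<forall>a::'e \<Rightarrow> 'k. a \<in> schemoid_algebra (ext_partition E q S) \<longrightarrow> K_q C E q S a = (\<lambda>_. 0)))"
proof -
  have qs: "quasi_schemoid C S" and fin: "finite (Mor C)" and groupoid: "is_groupoid C"
    using schemoid
    unfolding finite_basic_association_schemoid_def association_schemoid_def by blast+
  have cat: "is_category C" using groupoid unfolding is_groupoid_def by blast
  obtain x0 where x0: "x0 \<in> Obj C" using conn unfolding connected_cat_def by blast
  have cod: "Cod C g \<in> Obj C" if "g \<in> Mor C" for g using cat that unfolding is_category_def by blast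
  define n where "n = card (Hob x0)"
  have card_D: "card (pbH_obj C Hob g) = n" if "g \<in> Mor C" for g
    unfolding n_def pbH_obj_def
    using connected_groupoid_module_functor_card[OF groupoid conn H x0 cod[OF that]] .
  interpret schemoid_linear_extension C S Hob Hm E q act n
    using qs fin H module_functor_map_zero[OF H _ cat] ext D_fin card_D
    by unfold_locales (auto simp: module_functor_def)
  have "Mor C \<noteq> {}" using cat x0 unfolding is_category_def by blast
  moreover have "(\<exists>g\<in>Mor C. CHAR('k) dvd card (pbH_obj C Hob g)) \<longleftrightarrow> of_nat n = (0::'k)"
    using \<open>Mor C \<noteq> {}\<close> card_D by (auto simp: of_nat_eq_0_iff_char_dvd)
  ultimately show ?thesis using alg_iso_K_q not_alg_iso_K_q K_q_eq_zero by blast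
qed

end
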